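(* Under the standing setup below, the paths $p_1$ and $p_2$ are induced paths of $G$ (no two vertices of $p_i$ that are non-consecutive on $p_i$ are adjacent in $G$).
   Context: A biconnected graph is series-parallel if it contains no subdivision of $K_4$. A separation pair of a biconnected graph $G$ is a pair $(s,t)$ with $G-s-t$ disconnected; a transitive edge is an edge joining the two vertices of a separation pair. A component w.r.t. $(s,t)$ is the subgraph induced by $s$, $t$ and the vertex set of one connected component of $G-s-t$; vertices other than $s,t$ are internal. A component is heavy if it has an internal vertex adjacent to neither $s$ nor $t$. Standing setup: $G$ is a biconnected series-parallel graph without transitive edges such that every separation pair has at most two heavy components, and $G$ has at least one separation pair. $(s,t)$ is a separation pair of $G$ whose number $k$ of heavy components is maximum over all separation pairs. $G_1$ and $G_2$ are two distinct components w.r.t. $(s,t)$, chosen so that $G_1$ is heavy if $k\ge 1$ and $G_2$ is heavy if $k=2$. For $i\in\{1,2\}$, $p_i$ is a longest $s$–$t$ path in $G_i$. *)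

theory Defs
  imports Main
begin

definition graph :: "'a set \<Rightarrow> ('a \<Rightarrow> 'a \<Rightarrow> bool) \<Rightarrow> bool" where
  "graph V E \<longleftrightarrow> finite V \<and> (\<forall>x y. E x y \<longrightarrow> x \<in> V \<and> y \<in> V \<and> x \<noteq> y \<and> E y x)"

definition reach :: "('a \<Rightarrow> 'a \<Rightarrow> bool) \<Rightarrow> 'a set \<Rightarrow> 'a \<Rightarrow> 'a \<Rightarrow> bool" where
  "reach E X x y \<longleftrightarrow> (\<lambda>u v. E u v \<and> u \<in> X \<and> v \<in> X)\<^sup>*\<^sup>* x y"

definition connected_on :: "('a \<Rightarrow> 'a \<Rightarrow> bool) \<Rightarrow> 'a set \<Rightarrow> bool" where
  "connected_on E X \<longleftrightarrow> (\<forall>x\<in>X. \<forall>y\<in>X. reach E X x y)"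

definition biconnected :: "'a set \<Rightarrow> ('a \<Rightarrow> 'a \<Rightarrow> bool) \<Rightarrow> bool" where
  "biconnected V E \<longleftrightarrow> card V \<ge> 3 \<and> connected_on E V \<and> (\<forall>v\<in>V. connected_on E (V - {v}))"

definition is_path :: "('a \<Rightarrow> 'a \<Rightarrow> bool) \<Rightarrow> 'a set \<Rightarrow> 'a list \<Rightarrow> 'a \<Rightarrow> 'a \<Rightarrow> bool" where
  "is_path E X p a b \<longleftrightarrow> p \<noteq> [] \<and> distinct p \<and> set p \<subseteq> X \<and> hd p = a \<and> last p = b \<and>
     (\<forall>i. Suc i < length p \<longrightarrow> E (p ! i) (p ! Suc i))"

definition longest_path :: "('a \<Rightarrow> 'a \<Rightarrow> bool) \<Rightarrow> 'a set \<Rightarrow> 'a list \<Rightarrow> 'a \<Rightarrow> 'a \<Rightarrow> bool" where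
  "longest_path E X p a b \<longleftrightarrow> is_path E X p a b \<and> (\<forall>q. is_path E X q a b \<longrightarrow> length q \<le> length p)"

definition has_K4_subdivision :: "'a set \<Rightarrow> ('a \<Rightarrow> 'a \<Rightarrow> bool) \<Rightarrow> bool" where
  "has_K4_subdivision V E \<longleftrightarrow> (\<exists>(b :: nat \<Rightarrow> 'a) (P :: nat \<Rightarrow> nat \<Rightarrow> 'a list).
     inj_on b {0..<4} \<and>
     (\<forall>i j. i < j \<and> j < 4 \<longrightarrow> is_path E V (P i j) (b i) (b j)) \<and>
     (\<forall>i j. i < j \<and> j < 4 \<longrightarrow> (set (P i j) - {b i, b j}) \<inter> b ` {0..<4} = {}) \<and>
     (\<forall>i j k l. i < j \<and> j < 4 \<and> k < l \<and> l < 4 \<and> (i, j) \<noteq> (k, l) \<longrightarrow>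
        (set (P i j) - {b i, b j}) \<inter> (set (P k l) - {b k, b l}) = {}))"

definition series_parallel :: "'a set \<Rightarrow> ('a \<Rightarrow> 'a \<Rightarrow> bool) \<Rightarrow> bool" where
  "series_parallel V E \<longleftrightarrow> biconnected V E \<and> \<not> has_K4_subdivision V E"

definition sep_pair :: "'a set \<Rightarrow> ('a \<Rightarrow> 'a \<Rightarrow> bool) \<Rightarrow> 'a \<Rightarrow> 'a \<Rightarrow> bool" where
  "sep_pair V E s t \<longleftrightarrow> s \<in> V \<and> t \<in> V \<and> s \<noteq> t \<and> \<not> connected_on E (V - {s, t})"

text \<open>Components w.r.t. (s,t), represented by their sets of internal vertices
  (the connected components of G - s - t); the component itself is the subgraph
  induced by C \<union> {s,t}.\<close>
definition comps :: "'a set \<Rightarrow> ('a \<Rightarrow> 'a \<Rightarrow> bool) \<Rightarrow> 'a \<Rightarrow> 'a \<Rightarrow> 'a set set" where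
  "comps V E s t = {{y \<in> V - {s, t}. reach E (V - {s, t}) x y} | x. x \<in> V - {s, t}}"

definition heavy :: "('a \<Rightarrow> 'a \<Rightarrow> bool) \<Rightarrow> 'a \<Rightarrow> 'a \<Rightarrow> 'a set \<Rightarrow> bool" where
  "heavy E s t C \<longleftrightarrow> (\<exists>v\<in>C. \<not> E v s \<and> \<not> E v t)"

definition num_heavy :: "'a set \<Rightarrow> ('a \<Rightarrow> 'a \<Rightarrow> bool) \<Rightarrow> 'a \<Rightarrow> 'a \<Rightarrow> nat" where
  "num_heavy V E s t = card {C \<in> comps V E s t. heavy E s t C}"

definition induced_path :: "('a \<Rightarrow> 'a \<Rightarrow> bool) \<Rightarrow> 'a list \<Rightarrow> bool" where
  "induced_path E p \<longleftrightarrow> (\<forall>i j. Suc i < j \<and> j < length p \<longrightarrow> \<not> E (p ! i) (p ! j))"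

end

theory Submission
  imports Defs
begin

text \<open>A chord uv of an s-t path p through one component closes, together with an s-t path
  through a second component, a cycle on which u and v are not consecutive. Since G has no
  transitive edges, {u, v} is not a separation pair, so G - u - v contains a path joining the
  two arcs of the cycle between u and v; the cycle, the chord and this path form a subdivision
  of K4.\<close>

lemma is_path_iff_successively:
  "is_path E X p a b \<longleftrightarrow>
     p \<noteq> [] \<and> distinct p \<and> set p \<subseteq> X \<and> hd p = a \<and> last p = b \<and> successively E p"
  unfolding is_path_def successively_conv_nth by blast

lemma graph_sym: "graph V E \<Longrightarrow> E x y \<Longrightarrow> E y x"
  unfolding graph_def by blast

lemma graph_successively_rev: "graph V E \<Longrightarrow> successively E xs \<Longrightarrow> successively E (rev xs)"
  by (simp add: successively_rev) (erule successively_mono, erule graph_sym)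

lemma reach_refl: "reach E X a a"
  unfolding reach_def by simp

lemma reach_trans: "reach E X a b \<Longrightarrow> reach E X b c \<Longrightarrow> reach E X a c"
  unfolding reach_def by (rule rtranclp_trans)

lemma reach_sym:
  assumes "graph V E" "reach E X a b"
  shows "reach E X b a"
proof -
  have "symp (\<lambda>u v. E u v \<and> u \<in> X \<and> v \<in> X)"
    using graph_sym[OF assms(1)] by (auto intro: sympI)
  then show ?thesis
    using assms(2) unfolding reach_def by (rule symp_rtranclp[THEN sympD])
qed

lemma reach_mem: "reach E X a b \<Longrightarrow> a \<in> X \<Longrightarrow> b \<in> X"
  unfolding reach_def by (induction rule: rtranclp_induct) auto

lemma reach_restrict:
  assumes "reach E W a b" "a \<in> C" "\<And>z z'. z \<in> C \<Longrightarrow> z' \<in> W \<Longrightarrow> E z z' \<Longrightarrow> z' \<in> C"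
  shows "reach E C a b"
proof -
  have "(\<lambda>u v. E u v \<and> u \<in> W \<and> v \<in> W)\<^sup>*\<^sup>* a b" using assms(1) unfolding reach_def .
  then have "reach E C a b \<and> b \<in> C"
  proof induction
    case base
    show ?case using assms(2) reach_refl by fast
  next
    case (step y z)
    then have "z \<in> C" using assms(3) by blast
    with step show ?case unfolding reach_def by (auto intro: rtranclp.rtrancl_into_rtrancl)
  qed
  then show ?thesis ..
qed

lemma reach_imp_walk:
  assumes "reach E X a b" "a \<in> X"
  obtains w where "w \<noteq> []" "hd w = a" "last w = b" "successively E w" "set w \<subseteq> X"
proof -
  have "(\<lambda>u v. E u v \<and> u \<in> X \<and> v \<in> X)\<^sup>*\<^sup>* a b" using assms(1) unfolding reach_def .
  then have "\<exists>w. w \<noteq> [] \<and> hd w = a \<and> last w = b \<and> successively E w \<and> set w \<subseteq> X"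
  proof induction
    case base
    show ?case using assms(2) by (intro exI[of _ "[a]"]) auto
  next
    case (step y z)
    then obtain w where "w \<noteq> []" "hd w = a" "last w = y" "successively E w" "set w \<subseteq> X" by blast
    with step(2) show ?case
      by (intro exI[of _ "w @ [z]"]) (auto simp: successively_append_iff)
  qed
  with that show ?thesis by blast
qed

lemma walk_shortcut:
  assumes "w \<noteq> []" "successively E w"
  obtains p where "p \<noteq> []" "distinct p" "hd p = hd w" "last p = last w" "successively E p"
    "set p \<subseteq> set w"
  using assms
proof (induction "length w" arbitrary: w rule: less_induct)
  case less
  show ?case
  proof (cases "distinct w")
    case True
    with less.prems show ?thesis by blast
  next
    case False
    then obtain A z B C where w: "w = A @ [z] @ B @ [z] @ C"
      using not_distinct_decomp by blast
    let ?w = "A @ z # C"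
    have "successively E ?w" using less.prems(3) unfolding w
      by (auto simp: successively_append_iff successively_Cons split: list.splits)
    moreover have "hd ?w = hd w" "last ?w = last w" "set ?w \<subseteq> set w"
      unfolding w by (cases A; cases C; auto)+
    ultimately show ?thesis
      using less.hyps[of ?w] less.prems(1) unfolding w by fastforce
  qed
qed

lemma reach_imp_path:
  assumes "reach E X a b" "a \<in> X"
  obtains p where "is_path E X p a b"
proof -
  obtain w where "w \<noteq> []" "hd w = a" "last w = b" "successively E w" "set w \<subseteq> X"
    using reach_imp_walk[OF assms] .
  then show ?thesis
    using walk_shortcut[of w E] that unfolding is_path_iff_successively by (metis subset_trans)
qed

lemma walk_between_disjoint_sets:
  assumes "w \<noteq> []" "successively E w" "hd w \<in> S" "last w \<in> T" "S \<inter> T = {}"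
  obtains r where "r \<noteq> []" "hd r \<in> S" "last r \<in> T" "successively E r" "set r \<subseteq> set w"
    "set r \<inter> (S \<union> T) \<subseteq> {hd r, last r}"
  using assms
proof (induction "length w" arbitrary: w rule: less_induct)
  case less
  obtain z w' where w: "w = z # w'" using less.prems(2) by (cases w) auto
  have "w' \<noteq> []" using less.prems(4-6) w by auto
  show ?case
  proof (cases "\<exists>e\<in>set w'. e \<in> S")
    case True
    then obtain M e N where w': "w' = M @ e # N" "e \<in> S" by (meson split_list)
    have "successively E (e # N)" using less.prems(3) unfolding w w'
      by (auto simp: successively_append_iff successively_Cons)
    moreover have "last (e # N) = last w" "length (e # N) < length w" unfolding w w' by simp_all
    ultimately show ?thesis
      using less.hyps[of "e # N"] less.prems(1,5,6) w'(2) unfolding w w' by fastforce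
  next
    case False
    have "\<exists>e\<in>set w'. e \<in> T" using \<open>w' \<noteq> []\<close> less.prems(5) w by auto
    then obtain M e N where w': "w' = M @ e # N" "e \<in> T" "\<forall>y\<in>set M. y \<notin> T"
      using split_list_first_prop[of w' "\<lambda>y. y \<in> T"] by blast
    let ?r = "z # M @ [e]"
    have "successively E ?r" using less.prems(3) unfolding w w'
      by (auto simp: successively_append_iff successively_Cons hd_append split: if_splits)
    moreover have "set ?r \<inter> (S \<union> T) \<subseteq> {hd ?r, last ?r}" using False w' unfolding w by auto
    ultimately show ?thesis using less.prems(4) w'(2)
      by (intro less.prems(1)[of ?r]) (auto simp: w w')
  qed
qed

lemma reach_imp_path_between_disjoint_sets:
  assumes "reach E W a b" "a \<in> W" "a \<in> S" "b \<in> T" "S \<inter> T = {}"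
  obtains r x y where "x \<in> S" "y \<in> T" "is_path E W r x y" "set r \<inter> (S \<union> T) \<subseteq> {x, y}"
proof -
  obtain w where w: "w \<noteq> []" "hd w = a" "last w = b" "successively E w" "set w \<subseteq> W"
    using reach_imp_walk[OF assms(1,2)] .
  then obtain r where r: "r \<noteq> []" "hd r \<in> S" "last r \<in> T" "successively E r" "set r \<subseteq> set w"
      "set r \<inter> (S \<union> T) \<subseteq> {hd r, last r}"
    using walk_between_disjoint_sets[of w E S T] assms(3-5) by auto
  then obtain p where "p \<noteq> []" "distinct p" "hd p = hd r" "last p = last r" "successively E p"
      "set p \<subseteq> set r"
    using walk_shortcut by blast
  with r w that show ?thesis unfolding is_path_iff_successively by blast
qed

text \<open>This also admits [x, y] for an edge xy; the cycles built below have at least four vertices.\<close>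
definition is_cycle :: "('a \<Rightarrow> 'a \<Rightarrow> bool) \<Rightarrow> 'a list \<Rightarrow> bool" where
  "is_cycle E c \<longleftrightarrow> c \<noteq> [] \<and> distinct c \<and> successively E c \<and> E (last c) (hd c)"

lemma is_cycle_rotate: "is_cycle E (L @ M) \<Longrightarrow> is_cycle E (M @ L)"
  unfolding is_cycle_def
  by (cases "L = []"; cases "M = []") (auto simp: successively_append_iff)

lemma all_pairs_below_4:
  "(\<forall>i j. i < j \<and> j < (4::nat) \<longrightarrow> Q i j) \<longleftrightarrow> Q 0 1 \<and> Q 0 2 \<and> Q 0 3 \<and> Q 1 2 \<and> Q 1 3 \<and> Q 2 3"
proof -
  have "i < j \<and> j < (4::nat) \<longleftrightarrow> (i, j) \<in> {(0, 1), (0, 2), (0, 3), (1, 2), (1, 3), (2, 3)}" for i j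
    by auto
  then show ?thesis by auto
qed

lemma K4_subdivision_of_chord_and_bridge:
  assumes g: "graph V E"
    and c: "is_cycle E (u # A @ x # B @ v # D @ y # F)" "set (u # A @ x # B @ v # D @ y # F) \<subseteq> V"
    and uv: "E u v"
    and R: "is_path E V R x y" "set R \<inter> set (u # A @ x # B @ v # D @ y # F) \<subseteq> {x, y}"
  shows "has_K4_subdivision V E"
proof -
  define b where "b = nth [u, x, v, y]"
  define P where "P i j =
    (if (i, j) = (0, 1) then u # A @ [x] else if (i, j) = (0, 2) then [u, v]
     else if (i, j) = (0, 3) then u # rev F @ [y] else if (i, j) = (1, 2) then x # B @ [v]
     else if (i, j) = (1, 3) then R else v # D @ [y])" for i j :: nat
  have "successively E (u # A @ [x])" "successively E (x # B @ [v])" "successively E (v # D @ [y])"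
    and yFu: "successively E (y # F @ [u])"
    using c(1) unfolding is_cycle_def
    by (auto simp: successively_append_iff successively_Cons hd_append split: if_splits)
  moreover have "successively E (u # rev F @ [y])"
    using graph_successively_rev[OF g yFu] by simp
  ultimately have paths: "\<forall>i j. i < j \<and> j < 4 \<longrightarrow> is_path E V (P i j) (b i) (b j)"
    using c uv R(1) unfolding all_pairs_below_4 is_cycle_def
    by (simp add: P_def b_def is_path_iff_successively)
  define I where "I i j = set (P i j) - {b i, b j}" for i j
  have d: "distinct (u # A @ x # B @ v # D @ y # F)" using c(1) unfolding is_cycle_def by blast
  have four: "{0..<4::nat} = {0, 1, 2, 3}" by auto
  have branch: "b ` {0..<4} = {u, x, v, y}" by (simp add: four b_def)
  have "I 0 1 = set A" "I 0 2 = {}" "I 0 3 = set F" "I 1 2 = set B" "I 2 3 = set D"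
    using d by (auto simp: I_def P_def b_def)
  moreover have "I 1 3 \<inter> set (u # A @ x # B @ v # D @ y # F) = {}"
    using R(2) by (auto simp: I_def P_def b_def)
  ultimately have "\<forall>i j. i < j \<and> j < 4 \<longrightarrow> I i j \<inter> b ` {0..<4} = {}"
    and "\<forall>i j. i < j \<and> j < 4 \<longrightarrow>
      (\<forall>k l. k < l \<and> l < 4 \<longrightarrow> (i, j) \<noteq> (k, l) \<longrightarrow> I i j \<inter> I k l = {})"
    using d unfolding branch all_pairs_below_4 by auto
  moreover have "inj_on b {0..<4}" using d by (simp add: four b_def)
  ultimately show ?thesis
    using paths unfolding has_K4_subdivision_def I_def
    by (intro exI[of _ b] exI[of _ P] conjI) blast+
qed

lemma K4_subdivision_of_chorded_cycle:
  assumes g: "graph V E"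
    and c: "is_cycle E (u # P @ v # Q)" "set (u # P @ v # Q) \<subseteq> V"
    and PQ: "P \<noteq> []" "Q \<noteq> []"
    and uv: "E u v"
    and conn: "connected_on E (V - {u, v})"
  shows "has_K4_subdivision V E"
proof -
  have d: "distinct (u # P @ v # Q)" using c(1) unfolding is_cycle_def by blast
  have ends: "hd P \<in> V - {u, v}" "hd Q \<in> V - {u, v}" "hd P \<in> set P" "hd Q \<in> set Q"
    using c(2) d PQ by (auto dest: hd_in_set)
  then have "reach E (V - {u, v}) (hd P) (hd Q)"
    using conn unfolding connected_on_def by blast
  moreover have "set P \<inter> set Q = {}" using d by auto
  ultimately obtain R x y where xy: "x \<in> set P" "y \<in> set Q"
    and R: "is_path E (V - {u, v}) R x y" "set R \<inter> (set P \<union> set Q) \<subseteq> {x, y}"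
    by (rule reach_imp_path_between_disjoint_sets[OF _ ends(1,3,4)])
  obtain A B where P: "P = A @ x # B" using xy(1) by (meson split_list)
  obtain D F where Q: "Q = D @ y # F" using xy(2) by (meson split_list)
  have "is_path E V R x y" "set R \<inter> set (u # P @ v # Q) \<subseteq> {x, y}"
    using R unfolding is_path_iff_successively by auto
  with c show ?thesis
    unfolding P Q using K4_subdivision_of_chord_and_bridge[OF g _ _ uv] by simp
qed

lemma comps_subset: "C \<in> comps V E s t \<Longrightarrow> C \<subseteq> V - {s, t}"
  unfolding comps_def by auto

lemma comps_eq_reach:
  assumes "graph V E" "C \<in> comps V E s t" "a \<in> C"
  shows "C = {y \<in> V - {s, t}. reach E (V - {s, t}) a y}"
proof -
  obtain x where x: "C = {y \<in> V - {s, t}. reach E (V - {s, t}) x y}"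
    using assms(2) unfolding comps_def by auto
  then have "reach E (V - {s, t}) x a" using assms(3) by blast
  then have "reach E (V - {s, t}) x y \<longleftrightarrow> reach E (V - {s, t}) a y" for y
    using reach_sym[OF assms(1)] reach_trans by metis
  then show ?thesis unfolding x by blast
qed

lemma comps_nonempty: "C \<in> comps V E s t \<Longrightarrow> C \<noteq> {}"
  unfolding comps_def using reach_refl by fastforce

lemma comps_closed:
  assumes "graph V E" "C \<in> comps V E s t" "a \<in> C" "b \<in> V - {s, t}" "E a b"
  shows "b \<in> C"
proof -
  have "reach E (V - {s, t}) a b"
    using assms(4,5) comps_subset[OF assms(2)] assms(3) unfolding reach_def by auto
  then show ?thesis using comps_eq_reach[OF assms(1-3)] assms(4) by blast
qed

lemma comps_disjoint:
  assumes "graph V E" "C1 \<in> comps V E s t" "C2 \<in> comps V E s t" "C1 \<noteq> C2"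
  shows "C1 \<inter> C2 = {}"
  using comps_eq_reach[OF assms(1,2)] comps_eq_reach[OF assms(1,3)] assms(4) by blast

lemma comps_reach:
  assumes "graph V E" "C \<in> comps V E s t" "a \<in> C" "b \<in> C"
  shows "reach E C a b"
proof (rule reach_restrict)
  show "reach E (V - {s, t}) a b" using comps_eq_reach[OF assms(1-3)] assms(4) by blast
  show "\<And>z z'. z \<in> C \<Longrightarrow> z' \<in> V - {s, t} \<Longrightarrow> E z z' \<Longrightarrow> z' \<in> C"
    using comps_closed[OF assms(1,2)] by blast
qed fact

lemma comps_swap: "comps V E s t = comps V E t s"
  unfolding comps_def by (simp add: insert_commute)

lemma comps_adjacent:
  assumes g: "graph V E" and bc: "biconnected V E" and st: "s \<in> V" "t \<in> V" "s \<noteq> t"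
    and C: "C \<in> comps V E s t"
  shows "\<exists>a\<in>C. E s a"
proof (rule ccontr)
  assume no_edge: "\<not> (\<exists>a\<in>C. E s a)"
  obtain x where x: "x \<in> C" using comps_nonempty[OF C] by blast
  have "x \<in> V - {t}" "s \<in> V - {t}" using comps_subset[OF C] x st by auto
  moreover have "connected_on E (V - {t})" using bc st(2) unfolding biconnected_def by blast
  ultimately have "reach E (V - {t}) x s" unfolding connected_on_def by blast
  moreover have "z' \<in> C" if "z \<in> C" "z' \<in> V - {t}" "E z z'" for z z'
  proof -
    have "z' \<noteq> s" using no_edge that graph_sym[OF g] by blast
    then show ?thesis using comps_closed[OF g C] that by blast
  qed
  ultimately have "reach E C x s" using x by (blast intro: reach_restrict)
  then have "s \<in> C" using x by (rule reach_mem)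
  then show False using comps_subset[OF C] by blast
qed

lemma component_ear:
  assumes g: "graph V E" and bc: "biconnected V E" and st: "s \<in> V" "t \<in> V" "s \<noteq> t"
    and C: "C \<in> comps V E s t"
  obtains q where "q \<noteq> []" "distinct q" "set q \<subseteq> C" "successively E q" "E t (hd q)" "E (last q) s"
proof -
  obtain a where a: "a \<in> C" "E t a"
    using comps_adjacent[OF g bc st(2,1) st(3)[symmetric]] C comps_swap by metis
  obtain b where b: "b \<in> C" "E s b"
    using comps_adjacent[OF g bc st C] by blast
  obtain q where "is_path E C q a b"
    using reach_imp_path[OF comps_reach[OF g C a(1) b(1)] a(1)] .
  with that a b graph_sym[OF g] show ?thesis unfolding is_path_iff_successively by blast
qed

lemma split_at_two_indices:
  assumes "Suc i < j" "j < length p"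
  obtains P Q T where "p = P @ p ! i # Q @ p ! j # T" "Q \<noteq> []"
proof
  let ?Q = "take (j - Suc i) (drop (Suc i) p)"
  have "drop (Suc i) p = ?Q @ p ! j # drop (Suc j) p"
    using assms id_take_nth_drop[of "j - Suc i" "drop (Suc i) p"] by simp
  then show "p = take i p @ p ! i # ?Q @ p ! j # drop (Suc j) p"
    using assms id_take_nth_drop[of i p] by simp
  show "?Q \<noteq> []" using assms by simp
qed

lemma path_through_component_induced:
  assumes g: "graph V E" and bc: "biconnected V E" and nK4: "\<not> has_K4_subdivision V E"
    and no_transitive: "\<forall>x y. sep_pair V E x y \<longrightarrow> \<not> E x y"
    and st: "s \<in> V" "t \<in> V" "s \<noteq> t"
    and C: "C \<in> comps V E s t" "C' \<in> comps V E s t" "C \<noteq> C'"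
    and p: "is_path E (C \<union> {s, t}) p s t"
  shows "induced_path E p"
  unfolding induced_path_def
proof (intro allI impI notI)
  fix i j
  assume ij: "Suc i < j \<and> j < length p" and chord: "E (p ! i) (p ! j)"
  define u v where "u = p ! i" and "v = p ! j"
  have uv: "E u v" using chord unfolding u_def v_def .
  obtain q where q: "q \<noteq> []" "distinct q" "set q \<subseteq> C'" "successively E q" "E t (hd q)" "E (last q) s"
    using component_ear[OF g bc st C(2)] .
  have "C \<inter> C' = {}" "s \<notin> C'" "t \<notin> C'"
    using comps_disjoint[OF g C] comps_subset[OF C(2)] by auto
  then have "is_cycle E (p @ q)"
    using p q unfolding is_cycle_def is_path_iff_successively
    by (auto simp: successively_append_iff)
  moreover obtain P Q T where pPQT: "p = P @ u # Q @ v # T" "Q \<noteq> []"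
    using split_at_two_indices ij unfolding u_def v_def by metis
  ultimately have cyc: "is_cycle E (u # Q @ v # (T @ q @ P))"
    using is_cycle_rotate[of E P "u # Q @ v # T @ q"] by simp
  have cV: "set (u # Q @ v # (T @ q @ P)) \<subseteq> V"
    using p q(3) pPQT(1) comps_subset[OF C(1)] comps_subset[OF C(2)] st
    unfolding is_path_iff_successively by auto
  have "u \<noteq> v" using cyc unfolding is_cycle_def by auto
  then have "connected_on E (V - {u, v})"
    using no_transitive uv cV unfolding sep_pair_def by auto
  then have "has_K4_subdivision V E"
    using K4_subdivision_of_chorded_cycle[OF g cyc cV pPQT(2)] uv q(1) by simp
  with nK4 show False ..
qed

theorem claim1:
  fixes V :: "'a set" and E :: "'a \<Rightarrow> 'a \<Rightarrow> bool"
    and s t :: 'a and C1 C2 :: "'a set" and p1 p2 :: "'a list"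
  assumes "graph V E"
    and "series_parallel V E"
    and "\<forall>x y. sep_pair V E x y \<longrightarrow> \<not> E x y"
    and "\<forall>x y. sep_pair V E x y \<longrightarrow> num_heavy V E x y \<le> 2"
    and "\<exists>x y. sep_pair V E x y"
    and "sep_pair V E s t"
    and "\<forall>x y. sep_pair V E x y \<longrightarrow> num_heavy V E x y \<le> num_heavy V E s t"
    and "C1 \<in> comps V E s t" and "C2 \<in> comps V E s t" and "C1 \<noteq> C2"
    and "num_heavy V E s t \<ge> 1 \<longrightarrow> heavy E s t C1"
    and "num_heavy V E s t = 2 \<longrightarrow> heavy E s t C2"
    and "longest_path E (C1 \<union> {s, t}) p1 s t"
    and "longest_path E (C2 \<union> {s, t}) p2 s t"
  shows "induced_path E p1 \<and> induced_path E p2"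
proof -
  have bc: "biconnected V E" and nK4: "\<not> has_K4_subdivision V E"
    using assms(2) unfolding series_parallel_def by auto
  have st: "s \<in> V" "t \<in> V" "s \<noteq> t" using assms(6) unfolding sep_pair_def by auto
  have "is_path E (C1 \<union> {s, t}) p1 s t" "is_path E (C2 \<union> {s, t}) p2 s t"
    using assms(13,14) unfolding longest_path_def by blast+
  then show ?thesis
    using path_through_component_induced[OF assms(1) bc nK4 assms(3) st] assms(8-10) by blast
qed

end
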